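(* Let $\mu_0\cdots\mu_4\neq0$, let $H=\mathcal{V}(\sum_{i=0}^4\mu_i\prod_{j\neq i}X_j)\subset\mathbb{P}^3$, and assume the cubic surface $\mathcal{V}(\sum_i X_i^3/\mu_i)$ is smooth (equivalently, the only singularities of $H$ are the ten nodes $p_{ijk}=\mathcal{V}(X_i,X_j,X_k)$). Suppose there is a conic $C$ contained in the smooth locus of $H$ which meets the lines $\ell_{01}=\mathcal{V}(X_0,X_1)$ and $\ell_{02}=\mathcal{V}(X_0,X_2)$ but does not meet $\ell_{12}=\mathcal{V}(X_1,X_2)$. Then $$\sum_{i=0}^4\mu_i^3-\sum_{i\neq j}\mu_i^2\mu_j+2\sum_{i<j<k}\mu_i\mu_j\mu_k=0,$$ and this cubic form is irreducible.
   Context: $\mathbb{P}^3$ is the hyperplane $\sum_{i=0}^4X_i=0$ in $\mathbb{P}^4$ with coordinates $X_0,\dots,X_4$, over $\mathbb{C}$. The middle sum runs over ordered pairs of distinct indices, the last over 3-element subsets. *)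

theory Defs
  imports "HOL-Analysis.Analysis" "HOL-Computational_Algebra.Polynomial"
begin

text \<open>Points of C^5 are represented by functions nat => complex; only the
coordinates 0..4 matter.  P^3 is the hyperplane sum X_i = 0 in P^4.\<close>

definition in_P3 :: "(nat \<Rightarrow> complex) \<Rightarrow> bool" where
  "in_P3 x \<longleftrightarrow> (\<exists>i<5. x i \<noteq> 0) \<and> (\<Sum>i<5. x i) = 0"

definition pd :: "((nat \<Rightarrow> complex) \<Rightarrow> complex) \<Rightarrow> nat \<Rightarrow> (nat \<Rightarrow> complex) \<Rightarrow> complex" where
  "pd G i x = deriv (\<lambda>t. G (x(i := t))) (x i)"

text \<open>A point of the surface V(G) inside P^3 = V(sum X_i) is singular iff the
gradient of G there is proportional to the gradient (1,...,1) of the hyperplane,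
i.e. all partial derivatives coincide.\<close>
definition sing_pt_P3 :: "((nat \<Rightarrow> complex) \<Rightarrow> complex) \<Rightarrow> (nat \<Rightarrow> complex) \<Rightarrow> bool" where
  "sing_pt_P3 G x \<longleftrightarrow> in_P3 x \<and> G x = 0 \<and> (\<forall>i<5. \<forall>k<5. pd G i x = pd G k x)"

definition smooth_pt_P3 :: "((nat \<Rightarrow> complex) \<Rightarrow> complex) \<Rightarrow> (nat \<Rightarrow> complex) \<Rightarrow> bool" where
  "smooth_pt_P3 G x \<longleftrightarrow> in_P3 x \<and> G x = 0 \<and> \<not> (\<forall>i<5. \<forall>k<5. pd G i x = pd G k x)"

definition smooth_surface_P3 :: "((nat \<Rightarrow> complex) \<Rightarrow> complex) \<Rightarrow> bool" where
  "smooth_surface_P3 G \<longleftrightarrow> (\<forall>x. \<not> sing_pt_P3 G x)"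

definition Hform :: "(nat \<Rightarrow> complex) \<Rightarrow> (nat \<Rightarrow> complex) \<Rightarrow> complex" where
  "Hform \<mu> x = (\<Sum>i<5. \<mu> i * (\<Prod>j\<in>{..<5} - {i}. x j))"

definition Sform :: "(nat \<Rightarrow> complex) \<Rightarrow> (nat \<Rightarrow> complex) \<Rightarrow> complex" where
  "Sform \<mu> x = (\<Sum>i<5. x i ^ 3 / \<mu> i)"

text \<open>A (smooth) conic in P^3: image of P^1 under [s:t] |-> s^2 A + s t B + t^2 C,
with A, B, C linearly independent vectors of the hyperplane sum X_i = 0.\<close>
definition conic_pt :: "(nat \<Rightarrow> complex) \<Rightarrow> (nat \<Rightarrow> complex) \<Rightarrow> (nat \<Rightarrow> complex)
    \<Rightarrow> complex \<Rightarrow> complex \<Rightarrow> nat \<Rightarrow> complex" where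
  "conic_pt A B C s t = (\<lambda>i. s^2 * A i + s * t * B i + t^2 * C i)"

definition conic_data :: "(nat \<Rightarrow> complex) \<Rightarrow> (nat \<Rightarrow> complex) \<Rightarrow> (nat \<Rightarrow> complex) \<Rightarrow> bool" where
  "conic_data A B C \<longleftrightarrow>
     (\<Sum>i<5. A i) = 0 \<and> (\<Sum>i<5. B i) = 0 \<and> (\<Sum>i<5. C i) = 0 \<and>
     (\<forall>a b c. (\<forall>i<5. a * A i + b * B i + c * C i = 0) \<longrightarrow> a = 0 \<and> b = 0 \<and> c = 0)"

definition kform :: "(nat \<Rightarrow> 'a::comm_ring_1) \<Rightarrow> 'a" where
  "kform m = (\<Sum>i<5. m i ^ 3)
     - (\<Sum>i<5. \<Sum>j\<in>{..<5} - {i}. m i ^ 2 * m j)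
     + 2 * (\<Sum>S\<in>{S. S \<subseteq> {..<5::nat} \<and> card S = 3}. \<Prod>i\<in>S. m i)"

text \<open>The polynomial ring C[mu_0,...,mu_4], realised as iterated univariate
polynomials, and its five variables.\<close>
type_synonym mpoly5 = "complex poly poly poly poly poly"

definition mvar :: "nat \<Rightarrow> mpoly5" where
  "mvar i = (if i = 0 then [:[:[:[:monom (1::complex) 1:]:]:]:]
             else if i = 1 then [:[:[:monom (1::complex poly) 1:]:]:]
             else if i = 2 then [:[:monom (1::complex poly poly) 1:]:]
             else if i = 3 then [:monom (1::complex poly poly poly) 1:]
             else monom (1::complex poly poly poly poly) 1)"

end

theory Submission
  imports Defs
begin

text \<open>
  Parametrise the conic so that [1:0] and [0:1] are its points on l01 and l02; they are
  distinct because the conic misses l12. Along the conic H vanishes identically, and its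
  expansion at the two points gives the tangency relations, which after rescaling put the
  conic in the form X0 = \<mu>0 s t, X1 = t (c t - \<mu>1 s), X2 = s (d s - \<mu>2 t). Then
  H = \<mu>0 s^2 t^2 (k X3 X4 + M (\<mu>3 X4 + \<mu>4 X3)) with k = c d - \<mu>1 \<mu>2 and
  M = (c t - \<mu>1 s)(d s - \<mu>2 t). At each root of M exactly one of X3, X4 vanishes (the conic
  avoids the nodes), and not the same one at both roots. Up to exchanging X3 and X4, the forms
  U = k X3 + \<mu>3 M and V = k X4 + \<mu>4 M satisfy U V = \<mu>3 \<mu>4 M^2 and vanish at different
  roots of M, so they are multiples \<alpha> L1^2, \<beta> L2^2 of the squares of its linear factors.
  Comparing coefficients in U + V = k (X3 + X4) + (\<mu>3 + \<mu>4) M and eliminating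
  \<alpha>, \<beta>, c, d leaves the cubic relation.

  As a polynomial in \<mu>4 over C[\<mu>0, ..., \<mu>3] the cubic form is monic, so it is irreducible
  once it has no root there; specialising \<mu>1 = \<mu>2 = \<mu>3 = 1 yields a cubic over C[\<mu>0]
  that is Eisenstein at \<mu>0 after the shift \<mu>4 \<mapsto> \<mu>4 + 1.
\<close>

section \<open>The cubic form\<close>

definition elem_sym :: "(nat \<Rightarrow> 'a::comm_ring_1) \<Rightarrow> nat \<Rightarrow> nat set \<Rightarrow> 'a" where
  "elem_sym m k I = (\<Sum>S\<in>{S. S \<subseteq> I \<and> card S = k}. \<Prod>i\<in>S. m i)"

lemma subsets_card_Suc_insert:
  assumes "finite A" "a \<notin> A"
  shows "{S. S \<subseteq> insert a A \<and> card S = Suc k} =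
         {S. S \<subseteq> A \<and> card S = Suc k} \<union> insert a ` {S. S \<subseteq> A \<and> card S = k}"
proof (intro set_eqI iffI)
  fix S assume S: "S \<in> {S. S \<subseteq> insert a A \<and> card S = Suc k}"
  show "S \<in> {S. S \<subseteq> A \<and> card S = Suc k} \<union> insert a ` {S. S \<subseteq> A \<and> card S = k}"
  proof (cases "a \<in> S")
    case True
    then have "S = insert a (S - {a})" "S - {a} \<subseteq> A" "card (S - {a}) = k"
      using S assms(1) finite_subset by auto
    then show ?thesis by blast
  qed (use S in auto)
next
  fix S assume "S \<in> {S. S \<subseteq> A \<and> card S = Suc k} \<union> insert a ` {S. S \<subseteq> A \<and> card S = k}"
  then show "S \<in> {S. S \<subseteq> insert a A \<and> card S = Suc k}"
    using assms finite_subset by (fastforce simp: card_insert_if)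
qed

lemma elem_sym_insert:
  assumes "finite A" "a \<notin> A"
  shows "elem_sym m (Suc k) (insert a A) = elem_sym m (Suc k) A + m a * elem_sym m k A"
proof -
  let ?K = "{S. S \<subseteq> A \<and> card S = k}"
  have inj: "inj_on (insert a) ?K"
    using assms(2) by (auto simp: inj_on_def)
  have "elem_sym m (Suc k) (insert a A) =
      elem_sym m (Suc k) A + (\<Sum>S\<in>insert a ` ?K. \<Prod>i\<in>S. m i)"
    unfolding elem_sym_def subsets_card_Suc_insert[OF assms]
    by (rule sum.union_disjoint) (use assms in auto)
  also have "(\<Sum>S\<in>insert a ` ?K. \<Prod>i\<in>S. m i) = (\<Sum>T\<in>?K. m a * (\<Prod>i\<in>T. m i))"
    unfolding sum.reindex[OF inj, unfolded comp_def]
  proof (rule sum.cong)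
    fix T assume "T \<in> ?K"
    then have "finite T" "a \<notin> T" using assms finite_subset by auto
    then show "(\<Prod>i\<in>insert a T. m i) = m a * (\<Prod>i\<in>T. m i)" by simp
  qed simp
  finally show ?thesis
    by (simp add: elem_sym_def sum_distrib_left)
qed

lemma elem_sym_0:
  assumes "finite A" shows "elem_sym m 0 A = 1"
proof -
  have "{S. S \<subseteq> A \<and> card S = 0} = {{}}"
    using assms by (auto simp: card_eq_0_iff dest: rev_finite_subset)
  then show ?thesis by (simp add: elem_sym_def)
qed

lemma elem_sym_Suc_empty: "elem_sym m (Suc k) {} = 0"
proof -
  have no_subsets: "{S. S \<subseteq> {} \<and> card S = Suc k} = {}" by auto
  show ?thesis unfolding elem_sym_def no_subsets by simp
qed

lemma sum_lessThan_5: "(\<Sum>i<5::nat. g i) = g 0 + g 1 + g 2 + g 3 + g 4"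
  by (simp add: lessThan_Suc numeral_eq_Suc ac_simps)

lemma kform_explicit: "kform m =
  m 0^3 + m 1^3 + m 2^3 + m 3^3 + m 4^3
  - (m 0^2*(m 1+m 2+m 3+m 4) + m 1^2*(m 0+m 2+m 3+m 4) + m 2^2*(m 0+m 1+m 3+m 4)
     + m 3^2*(m 0+m 1+m 2+m 4) + m 4^2*(m 0+m 1+m 2+m 3))
  + 2*(m 0*m 1*m 2 + m 0*m 1*m 3 + m 0*m 1*m 4 + m 0*m 2*m 3 + m 0*m 2*m 4 + m 0*m 3*m 4
       + m 1*m 2*m 3 + m 1*m 2*m 4 + m 1*m 3*m 4 + m 2*m 3*m 4)"
proof -
  have "(\<Sum>S\<in>{S. S \<subseteq> {..<5::nat} \<and> card S = 3}. \<Prod>i\<in>S. m i) = elem_sym m 3 {0,1,2,3,4}"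
    by (simp add: elem_sym_def lessThan_Suc numeral_eq_Suc insert_commute)
  also have "\<dots> = m 0*m 1*m 2 + m 0*m 1*m 3 + m 0*m 1*m 4 + m 0*m 2*m 3 + m 0*m 2*m 4
       + m 0*m 3*m 4 + m 1*m 2*m 3 + m 1*m 2*m 4 + m 1*m 3*m 4 + m 2*m 3*m 4"
    by (simp add: numeral_eq_Suc elem_sym_insert elem_sym_0 elem_sym_Suc_empty algebra_simps)
  finally show ?thesis
    unfolding kform_def by (simp add: sum_lessThan_5 sum_diff1 sum_distrib_left[symmetric]
        algebra_simps)
qed

lemma kform_factored:
  "kform m = (m 3 + m 4 - m 1 - m 2 + m 0) * (m 3 + m 4 - m 1 + m 2 - m 0)
     * (m 3 + m 4 + m 1 - m 2 - m 0) - 4 * (m 3 * m 4) * (m 3 + m 4 - m 1 - m 2 - m 0)"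
  unfolding kform_explicit by (simp add: algebra_simps power2_eq_square power3_eq_cube)

lemma kform_transpose_34: "kform (m \<circ> Transposition.transpose 3 4) = kform m"
  unfolding kform_explicit by (simp add: Transposition.transpose_def algebra_simps)

section \<open>Irreducibility\<close>

lemma irreducible_if_no_root:
  fixes p :: "'a::idom_divide poly"
  assumes deg: "0 < degree p" "degree p \<le> 3" and monic: "lead_coeff p = 1"
    and no_root: "\<And>r. poly p r \<noteq> 0"
  shows "irreducible p"
proof -
  have "p \<noteq> 0" using deg by auto
  have no_linear_factor: "degree q \<noteq> 1" if "q dvd p" "lead_coeff q dvd 1" for q
  proof
    assume "degree q = 1"
    then obtain q0 q1 where q: "q = [:q0, q1:]" by (metis degree1_coeffs)
    obtain u where "q1 * u = 1" using \<open>lead_coeff q dvd 1\<close> q \<open>degree q = 1\<close>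
      by (auto elim: dvdE simp: eq_commute[of 1])
    then have "poly q (- q0 * u) = 0" by (simp add: q algebra_simps)
    then have "poly p (- q0 * u) = 0" using \<open>q dvd p\<close> by (auto elim: dvdE)
    with no_root show False by blast
  qed
  show ?thesis
  proof (rule irreducibleI)
    show "p \<noteq> 0" by fact
    show "\<not> is_unit p" using deg by (auto elim: is_unit_polyE)
  next
    fix a b assume p_eq: "p = a * b"
    then have "a \<noteq> 0" "b \<noteq> 0" using \<open>p \<noteq> 0\<close> by auto
    then have deg_sum: "degree a + degree b = degree p" by (simp add: p_eq degree_mult_eq)
    have lc: "lead_coeff a * lead_coeff b = 1" using monic by (simp add: p_eq lead_coeff_mult)
    then have "lead_coeff a dvd 1" "lead_coeff b dvd 1" by (metis dvd_triv_left dvd_triv_right)+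
    moreover have "is_unit q" if "degree q = 0" "lead_coeff q dvd 1" for q :: "'a poly"
      using that by (metis degree_0_id is_unit_const_poly_iff)
    moreover have not_linear: "degree a \<noteq> 1" "degree b \<noteq> 1"
      using no_linear_factor \<open>lead_coeff a dvd 1\<close> \<open>lead_coeff b dvd 1\<close> p_eq by auto
    moreover have "degree a = 0 \<or> degree b = 0" using deg deg_sum not_linear by linarith
    ultimately show "is_unit a \<or> is_unit b" by blast
  qed
qed

definition kform_coeff2 :: "(nat \<Rightarrow> 'a::comm_ring_1) \<Rightarrow> 'a" where
  "kform_coeff2 m = - (m 0 + m 1 + m 2 + m 3)"

definition kform_coeff1 :: "(nat \<Rightarrow> 'a::comm_ring_1) \<Rightarrow> 'a" where
  "kform_coeff1 m = 2*(m 0*m 1 + m 0*m 2 + m 0*m 3 + m 1*m 2 + m 1*m 3 + m 2*m 3)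
     - (m 0^2 + m 1^2 + m 2^2 + m 3^2)"

definition kform_coeff0 :: "(nat \<Rightarrow> 'a::comm_ring_1) \<Rightarrow> 'a" where
  "kform_coeff0 m = m 0^3 + m 1^3 + m 2^3 + m 3^3
     - (m 0^2*(m 1+m 2+m 3) + m 1^2*(m 0+m 2+m 3) + m 2^2*(m 0+m 1+m 3) + m 3^2*(m 0+m 1+m 2))
     + 2*(m 0*m 1*m 2 + m 0*m 1*m 3 + m 0*m 2*m 3 + m 1*m 2*m 3)"

lemma kform_cubic_in_last:
  "kform m = m 4^3 + kform_coeff2 m * m 4^2 + kform_coeff1 m * m 4 + kform_coeff0 m"
  unfolding kform_explicit kform_coeff2_def kform_coeff1_def kform_coeff0_def
  by (simp add: algebra_simps power2_eq_square power3_eq_cube)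

lemma kform_coeffs_const:
  "kform_coeff2 (\<lambda>i. [:f i:]) = [:kform_coeff2 f:]"
  "kform_coeff1 (\<lambda>i. [:f i:]) = [:kform_coeff1 f:]"
  "kform_coeff0 (\<lambda>i. [:f i:]) = [:kform_coeff0 f:]"
  by (simp_all add: kform_coeff2_def kform_coeff1_def kform_coeff0_def
      poly_const_pow numeral_poly)

lemma kform_coeffs_cong:
  assumes "\<And>i. i < 4 \<Longrightarrow> f i = g i"
  shows "kform_coeff2 f = kform_coeff2 g" "kform_coeff1 f = kform_coeff1 g"
    "kform_coeff0 f = kform_coeff0 g"
  using assms by (simp_all add: kform_coeff2_def kform_coeff1_def kform_coeff0_def)

definition cvar :: "nat \<Rightarrow> complex poly poly poly poly" where
  "cvar i = (if i = 0 then [:[:[:monom (1::complex) 1:]:]:]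
             else if i = 1 then [:[:monom (1::complex poly) 1:]:]
             else if i = 2 then [:monom (1::complex poly poly) 1:]
             else monom (1::complex poly poly poly) 1)"

lemma kform_mvar: "kform mvar = [:kform_coeff0 cvar, kform_coeff1 cvar, kform_coeff2 cvar, 1:]"
proof -
  have "mvar i = [:cvar i:]" if "i < 4" for i
    using that by (auto simp: mvar_def cvar_def)
  then have "kform_coeff2 mvar = [:kform_coeff2 cvar:]" "kform_coeff1 mvar = [:kform_coeff1 cvar:]"
    "kform_coeff0 mvar = [:kform_coeff0 cvar:]"
    by (auto simp: kform_coeffs_const[symmetric] intro!: kform_coeffs_cong)
  moreover have "mvar 4 = [:0, 1:]" by (simp add: mvar_def monom_Suc)
  ultimately show ?thesis
    unfolding kform_cubic_in_last by (simp add: monom_Suc power3_eq_cube power2_eq_square)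
qed

lemma specialized_kform_nonzero:
  fixes y :: "complex poly"
  defines "u \<equiv> [:0, 1:]"
  shows "kform (\<lambda>i. if i = 0 then u else if i = 4 then y else 1) \<noteq> 0"
proof
  define z where "z = y - 1"
  assume "kform (\<lambda>i. if i = 0 then u else if i = 4 then y else 1) = 0"
  then have eq: "z^3 - u*z^2 + (4*u - u^2)*z + u*(u^2 - 4*u + 8) = 0"
    unfolding kform_explicit z_def by (simp add: algebra_simps power2_eq_square power3_eq_cube)
  have u_root: "poly u 0 = 0" by (simp add: u_def)
  \<comment> \<open>Eisenstein at u: reducing mod u forces u to divide z, and then u^2 divides the
    constant term 8 u.\<close>
  have "poly z 0 ^ 3 = 0"
    using arg_cong[OF eq, of "\<lambda>p. poly p 0"] by (simp add: u_root poly_power)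
  then have "u dvd z" by (simp add: poly_eq_0_iff_dvd u_def)
  then obtain w where w: "z = u * w" by (auto elim: dvdE)
  have "u * (u^2*w^3 - u^2*w^2 + (4*u - u^2)*w + (u^2 - 4*u + 8)) = 0"
    using eq unfolding w by (simp add: algebra_simps power2_eq_square power3_eq_cube)
  then have "u^2*w^3 - u^2*w^2 + (4*u - u^2)*w + (u^2 - 4*u + 8) = 0" by (simp add: u_def)
  from arg_cong[OF this, of "\<lambda>p. poly p 0"] show False by (simp add: u_root poly_power)
qed

definition specialize :: "complex poly poly poly poly \<Rightarrow> complex poly" where
  "specialize p = poly (poly (poly p 1) 1) 1"

lemma specialize_hom:
  "specialize (a + b) = specialize a + specialize b"
  "specialize (a * b) = specialize a * specialize b"
  "specialize (a - b) = specialize a - specialize b"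
  "specialize (- a) = - specialize a"
  "specialize (a ^ n) = specialize a ^ n"
  "specialize (numeral k) = numeral k"
  by (simp_all add: specialize_def poly_power)

lemma irreducible_kform_mvar: "irreducible (kform mvar)"
proof (rule irreducible_if_no_root)
  show "0 < degree (kform mvar)" "degree (kform mvar) \<le> 3" "lead_coeff (kform mvar) = 1"
    by (simp_all add: kform_mvar)
  fix r
  define u :: "complex poly" where "u = [:0, 1:]"
  define m where "m i = (if i = 0 then u else if i = 4 then specialize r else 1)" for i :: nat
  have "specialize (cvar 0) = u" "specialize (cvar 1) = 1" "specialize (cvar 2) = 1"
    "specialize (cvar 3) = 1"
    by (simp_all add: u_def specialize_def cvar_def monom_Suc)
  then have "specialize (poly (kform mvar) r) = kform m"
    unfolding kform_mvar kform_cubic_in_last[of m] kform_coeff2_def kform_coeff1_def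
      kform_coeff0_def m_def
    by (simp add: specialize_hom algebra_simps power2_eq_square power3_eq_cube)
  then show "poly (kform mvar) r \<noteq> 0"
    using specialized_kform_nonzero[of "specialize r"] unfolding m_def u_def
    by (auto simp: specialize_def)
qed

section \<open>The quartic H and its nodes\<close>

lemma Hform_explicit: "Hform \<mu> x =
    \<mu> 0 * (x 1 * x 2 * x 3 * x 4) + \<mu> 1 * (x 0 * x 2 * x 3 * x 4) + \<mu> 2 * (x 0 * x 1 * x 3 * x 4)
  + \<mu> 3 * (x 0 * x 1 * x 2 * x 4) + \<mu> 4 * (x 0 * x 1 * x 2 * x 3)"
proof -
  have "{..<5::nat} - {0} = {1,2,3,4}" "{..<5::nat} - {1} = {0,2,3,4}"
    "{..<5::nat} - {2} = {0,1,3,4}" "{..<5::nat} - {3} = {0,1,2,4}" "{..<5::nat} - {4} = {0,1,2,3}"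
    by auto
  then show ?thesis unfolding Hform_def sum_lessThan_5 by (simp add: ac_simps)
qed

lemma Hform_eq_0_if_two_coords_0:
  assumes "i < 5" "j < 5" "i \<noteq> j" "x i = 0" "x j = 0"
  shows "Hform \<mu> x = 0"
  unfolding Hform_def
proof (intro sum.neutral ballI)
  fix l :: nat assume "l \<in> {..<5}"
  have "\<exists>a\<in>{..<5} - {l}. x a = 0" using assms by (cases "l = i") auto
  then show "\<mu> l * prod x ({..<5} - {l}) = 0" by (simp add: prod_zero_iff)
qed

lemma sing_pt_if_three_coords_0:
  assumes "in_P3 x" "i < 5" "j < 5" "k < 5" "i \<noteq> j" "i \<noteq> k" "j \<noteq> k"
    and "x i = 0" "x j = 0" "x k = 0"
  shows "sing_pt_P3 (Hform \<mu>) x"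
proof -
  \<comment> \<open>H vanishes to second order along the node: changing one coordinate keeps two of them zero.\<close>
  have H_upd: "Hform \<mu> (x(l := t)) = 0" for l t
  proof -
    obtain a b where "a \<in> {i, j, k}" "b \<in> {i, j, k}" "a \<noteq> b" "a \<noteq> l" "b \<noteq> l"
      using assms(5-7) by (cases "l = i") blast+
    then show ?thesis
      using assms(2-4,8-10) by (intro Hform_eq_0_if_two_coords_0[of a b]) auto
  qed
  have "pd (Hform \<mu>) l x = 0" for l
    unfolding pd_def H_upd by simp
  moreover have "Hform \<mu> x = 0"
    using H_upd[of i "x i"] by simp
  ultimately show ?thesis
    using assms(1) by (simp add: sing_pt_P3_def)
qed

lemma smooth_pt_not_three_coords_0:
  assumes "smooth_pt_P3 (Hform \<mu>) x" "i < 5" "j < 5" "k < 5" "i \<noteq> j" "i \<noteq> k" "j \<noteq> k"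
  shows "x i \<noteq> 0 \<or> x j \<noteq> 0 \<or> x k \<noteq> 0"
  using sing_pt_if_three_coords_0[of x i j k \<mu>] assms
  unfolding smooth_pt_P3_def sing_pt_P3_def by blast

section \<open>Identities extended by continuity\<close>

lemma continuous_on_const_off_finite:
  fixes \<phi> :: "'a::{perfect_space, t2_space} \<Rightarrow> 'b::t2_space"
  assumes "continuous_on UNIV \<phi>" "finite S" "\<And>t. t \<notin> S \<Longrightarrow> \<phi> t = c"
  shows "\<phi> z = c"
proof -
  have "eventually (\<lambda>w. \<phi> w = c) (at z)"
    unfolding eventually_at_topological
  proof (intro exI conjI ballI impI)
    show "open (- (S - {z}))"
      using assms(2) by (intro open_Compl finite_imp_closed) simp
  qed (use assms(3) in auto)
  then have "(\<phi> \<longlongrightarrow> c) (at z)"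
    by (rule tendsto_eventually)
  moreover have "(\<phi> \<longlongrightarrow> \<phi> z) (at z)"
    using assms(1) continuous_on_eq_continuous_at isCont_def open_UNIV UNIV_I by metis
  ultimately show ?thesis
    using tendsto_unique[OF at_neq_bot] by blast
qed

lemma continuous_eq_0_off_axes:
  fixes P :: "complex \<Rightarrow> complex \<Rightarrow> complex"
  assumes "\<And>s. continuous_on UNIV (P s)" "\<And>t. continuous_on UNIV (\<lambda>s. P s t)"
    and "\<And>s t. s \<noteq> 0 \<Longrightarrow> t \<noteq> 0 \<Longrightarrow> P s t = 0"
  shows "P s t = 0"
proof -
  have "P s' t' = 0" if "s' \<noteq> 0" for s' t'
    using continuous_on_const_off_finite[OF assms(1), of "{0}"] assms(3) that by blast
  then show ?thesis
    using continuous_on_const_off_finite[OF assms(2), of "{0}"] by blast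
qed

section \<open>Binary quadratic forms\<close>

definition qform :: "complex \<Rightarrow> complex \<Rightarrow> complex \<Rightarrow> complex \<Rightarrow> complex \<Rightarrow> complex" where
  "qform a b c s t = a * s^2 + b * s * t + c * t^2"

lemma conic_pt_qform: "conic_pt A B C s t i = qform (A i) (B i) (C i) s t"
  by (simp add: conic_pt_def qform_def)

lemma qform_lincomb:
  "x * qform a b c s t + y * qform a' b' c' s t = qform (x*a + y*a') (x*b + y*b') (x*c + y*c') s t"
  by (simp add: qform_def algebra_simps)

lemma continuous_on_qform [continuous_intros]:
  "continuous_on S f \<Longrightarrow> continuous_on S g \<Longrightarrow> continuous_on S (\<lambda>x. qform a b c (f x) (g x))"
  unfolding qform_def by (intro continuous_intros)

lemma qform_root_factor:
  assumes "qform a b c p q = 0"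
  shows "p * q * qform a b c s t = (q * s - p * t) * (a * p * s - c * q * t)"
proof -
  have "p * q * qform a b c s t - (q * s - p * t) * (a * p * s - c * q * t)
      = s * t * qform a b c p q"
    unfolding qform_def by algebra
  then show ?thesis using assms by simp
qed

lemma qform_two_roots:
  assumes "qform a b c p1 q1 = 0" "qform a b c p2 q2 = 0"
    and "p1 \<noteq> 0" "q1 \<noteq> 0" "p1 * q2 - p2 * q1 \<noteq> 0"
  shows "q1 * q2 * qform a b c s t = a * (q1 * s - p1 * t) * (q2 * s - p2 * t)"
proof -
  have "(q1 * p2 - p1 * q2) * (a * p1 * p2 - c * q1 * q2) = 0"
    using qform_root_factor[OF assms(1), of p2 q2] assms(2) by simp
  moreover have "q1 * p2 - p1 * q2 \<noteq> 0"
    using assms(5) by (simp add: algebra_simps)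
  ultimately have "a * p1 * p2 = c * q1 * q2" by simp
  then have
    "p1 * (q1 * q2 * qform a b c s t) = p1 * (a * (q1 * s - p1 * t) * (q2 * s - p2 * t))"
    using qform_root_factor[OF assms(1), of s t] by algebra
  then show ?thesis using assms(3) by simp
qed

lemma qform_square_if_product_square:
  assumes "p \<noteq> 0" "q \<noteq> 0"
    and prod: "\<And>s t. qform u0 u1 u2 s t * qform v0 v1 v2 s t = (q * s - p * t)^2 * W s t"
    and cont: "continuous_on UNIV (W p)"
    and root: "qform u0 u1 u2 p q = 0" and nonroot: "qform v0 v1 v2 p q \<noteq> 0"
  shows "\<exists>\<alpha>. \<forall>s t. qform u0 u1 u2 s t = \<alpha> * (q * s - p * t)^2"
proof -
  note fac = qform_root_factor[OF root]
  \<comment> \<open>With p q U = L U' (L = q s - p t), U V = L^2 W gives U' V = p q L W off the root; by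
    continuity also at the root, so U' vanishes there too and U is a multiple of L^2.\<close>
  define \<phi> where
    "\<phi> t = (u0 * p * p - u2 * q * t) * qform v0 v1 v2 p t - p * q * (q * p - p * t) * W p t" for t
  have cancel: "p * (q - t) * \<phi> t = 0" for t
    unfolding \<phi>_def using fac[of p t] prod[of p t] by algebra
  have "\<phi> t = 0" if "t \<notin> {q}" for t
    using cancel[of t] that \<open>p \<noteq> 0\<close> by simp
  moreover have "continuous_on UNIV \<phi>"
    unfolding \<phi>_def by (intro continuous_intros cont)
  ultimately have "\<phi> q = 0"
    using continuous_on_const_off_finite[of \<phi> "{q}"] by blast
  then have key: "u0 * p * p = u2 * q * q"
    using nonroot by (simp add: \<phi>_def)
  have "p * (q^2 * qform u0 u1 u2 s t) = p * (u0 * (q * s - p * t)^2)" for s t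
    using fac[of s t] key by algebra
  then have "qform u0 u1 u2 s t = u0 / q^2 * (q * s - p * t)^2" for s t
    using assms(1,2) by (simp add: field_simps)
  then show ?thesis by blast
qed

section \<open>Elimination\<close>

lemma elimination_linear_part:
  fixes m0 m1 m2 \<sigma> K p q :: complex
  assumes L1: "m1^2*p + K*q + \<sigma>*m1*K + (K - m1*m2)*K = 0"
    and L2: "K*p + m2^2*q + \<sigma>*m2*K + (K - m1*m2)*K = 0"
    and L3: "-2*m1*p - 2*m2*q - \<sigma>*(K + m1*m2) + (K - m1*m2)*(m0 - m1 - m2) = 0"
    and K: "K \<noteq> m1*m2"
  shows "p*(K + m1*m2) = K*(m2*(m2 - \<sigma>) - K)"
    and "q*(K + m1*m2) = K*(m1*(m1 - \<sigma>) - K)"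
    and "(\<sigma> - m1 - m2 - m0)*K = m1*m2*(\<sigma> - m1 - m2 + m0)"
proof -
  have "(K - m1*m2) * (p*(K + m1*m2) - K*(m2*(m2 - \<sigma>) - K)) = 0"
    using L1 L2 by algebra
  with K show "p*(K + m1*m2) = K*(m2*(m2 - \<sigma>) - K)" by simp
  have "(K - m1*m2) * (q*(K + m1*m2) - K*(m1*(m1 - \<sigma>) - K)) = 0"
    using L1 L2 by algebra
  with K show "q*(K + m1*m2) = K*(m1*(m1 - \<sigma>) - K)" by simp
  have "(K - m1*m2) * ((\<sigma> - m1 - m2 - m0)*K - m1*m2*(\<sigma> - m1 - m2 + m0)) = 0"
    using L1 L2 L3 by algebra
  with K show "(\<sigma> - m1 - m2 - m0)*K = m1*m2*(\<sigma> - m1 - m2 + m0)" by simp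
qed

lemma cubic_relation_degenerate:
  fixes m0 m1 m2 \<sigma> \<pi> K p q :: complex
  assumes K: "K = - m1*m2"
    and L1: "m1^2*p + K*q + \<sigma>*m1*K + (K - m1*m2)*K = 0"
    and L3: "-2*m1*p - 2*m2*q - \<sigma>*(K + m1*m2) + (K - m1*m2)*(m0 - m1 - m2) = 0"
    and L4: "p*q = \<pi>*K"
    and E3: "(\<sigma> - m1 - m2 - m0)*K = m1*m2*(\<sigma> - m1 - m2 + m0)"
    and nz: "m1 \<noteq> 0" "m2 \<noteq> 0"
  shows "(\<sigma> - m1 - m2 + m0) * (\<sigma> - m1 + m2 - m0) * (\<sigma> + m1 - m2 - m0)
    = 4 * \<pi> * (\<sigma> - m1 - m2 - m0)"
proof -
  have "m1*m2*2*(\<sigma> - m1 - m2) = 0" using E3 K by algebra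
  then have "\<sigma> - m1 - m2 = 0" using nz by (simp only: mult_eq_0_iff) simp
  then have \<sigma>: "\<sigma> = m1 + m2" by algebra
  have "m1*(m1*p - m2*q - m1*m2*(m1 - m2)) = 0" using L1 \<sigma> K by algebra
  then have diff: "m1*p - m2*q = m1*m2*(m1 - m2)" using nz by simp
  have sum: "m1*p + m2*q = -m1*m2*(m0 - m1 - m2)" using L3 \<sigma> K by algebra
  have "m1*(2*p - m2*(2*m1 - m0)) = 0" using diff sum by algebra
  then have p: "2*p = m2*(2*m1 - m0)" using nz by simp
  have "m2*(2*q - m1*(2*m2 - m0)) = 0" using diff sum by algebra
  then have q: "2*q = m1*(2*m2 - m0)" using nz by simp
  have "m1*m2*((2*m1 - m0)*(2*m2 - m0) + 4*\<pi>) = 4*(p*q - \<pi>*K)"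
    using p q K by algebra
  then have "(2*m1 - m0)*(2*m2 - m0) + 4*\<pi> = 0" using L4 nz by simp
  then show ?thesis using \<sigma> by algebra
qed

lemma cubic_relation_generic:
  fixes m0 m1 m2 \<sigma> \<pi> K p q :: complex
  defines "w \<equiv> \<sigma> - m1 - m2"
  assumes P: "p*(K + m1*m2) = K*(m2*(m2 - \<sigma>) - K)"
    and Q: "q*(K + m1*m2) = K*(m1*(m1 - \<sigma>) - K)"
    and E3: "(w - m0)*K = m1*m2*(w + m0)"
    and L4: "p*q = \<pi>*K"
    and nz: "K \<noteq> 0" "K + m1*m2 \<noteq> 0" "m0 \<noteq> 0" "m1 \<noteq> 0" "m2 \<noteq> 0"
  shows "(w + m0) * (w + 2*m2 - m0) * (w + 2*m1 - m0) = 4 * \<pi> * (w - m0)"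
proof -
  define A1 where "A1 = m1*(m1 - \<sigma>)"
  define A2 where "A2 = m2*(m2 - \<sigma>)"
  have "K * (K*(K - A1)*(K - A2)) = K * (\<pi>*(K + m1*m2)^2)"
    using P Q L4 unfolding A1_def A2_def by algebra
  then have M: "K*(K - A1)*(K - A2) = \<pi>*(K + m1*m2)^2" using nz(1) by simp
  have "w \<noteq> 0"
  proof
    assume "w = 0"
    then have "m0*(K + m1*m2) = 0" using E3 by algebra
    then show False using nz by simp
  qed
  \<comment> \<open>Multiplying M by (w - m0)^3 and using E3 to eliminate K leaves (m1 m2 w)^2 times the claim.\<close>
  have a: "(w - m0)*(K - A1) = m1*w*(w + 2*m2 - m0)" using E3 unfolding A1_def w_def by algebra
  have b: "(w - m0)*(K - A2) = m2*w*(w + 2*m1 - m0)" using E3 unfolding A2_def w_def by algebra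
  have c: "(w - m0)*(K + m1*m2) = 2*m1*m2*w" using E3 by algebra
  have "(m1*m2*w)^2 * ((w + m0)*(w + 2*m2 - m0)*(w + 2*m1 - m0))
      = ((w - m0)*K) * ((w - m0)*(K - A1)) * ((w - m0)*(K - A2))"
    unfolding a b E3 by algebra
  also have "\<dots> = (w - m0)^3 * (K*(K - A1)*(K - A2))" by algebra
  also have "\<dots> = (w - m0) * \<pi> * ((w - m0)*(K + m1*m2))^2" unfolding M by algebra
  also have "\<dots> = (m1*m2*w)^2 * (4*\<pi>*(w - m0))" unfolding c by algebra
  finally show ?thesis using nz \<open>w \<noteq> 0\<close> by simp
qed

lemma cubic_relation_by_elimination:
  fixes m0 m1 m2 \<sigma> \<pi> K p q :: complex
  assumes L1: "m1^2*p + K*q + \<sigma>*m1*K + (K - m1*m2)*K = 0"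
    and L2: "K*p + m2^2*q + \<sigma>*m2*K + (K - m1*m2)*K = 0"
    and L3: "-2*m1*p - 2*m2*q - \<sigma>*(K + m1*m2) + (K - m1*m2)*(m0 - m1 - m2) = 0"
    and L4: "p*q = \<pi>*K"
    and nz: "K \<noteq> 0" "K \<noteq> m1*m2" "m0 \<noteq> 0" "m1 \<noteq> 0" "m2 \<noteq> 0"
  shows "(\<sigma> - m1 - m2 + m0) * (\<sigma> - m1 + m2 - m0) * (\<sigma> + m1 - m2 - m0)
    = 4 * \<pi> * (\<sigma> - m1 - m2 - m0)"
proof (cases "K = - m1*m2")
  case True
  with cubic_relation_degenerate[OF _ L1 L3 L4 elimination_linear_part(3)[OF L1 L2 L3 nz(2)]] nz
  show ?thesis by simp
next
  case False
  then have "K + m1*m2 \<noteq> 0" by (simp add: eq_neg_iff_add_eq_0)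
  with cubic_relation_generic[OF elimination_linear_part[OF L1 L2 L3 nz(2)] L4 nz(1) _ nz(3-5)]
  show ?thesis by (simp add: algebra_simps)
qed

lemma kform_eq_0_if_square_decomposition:
  fixes m :: "nat \<Rightarrow> complex" and \<alpha> \<beta> c d :: complex
  assumes nz: "m 0 \<noteq> 0" "m 1 \<noteq> 0" "m 2 \<noteq> 0" "c \<noteq> 0" "d \<noteq> 0" "c*d \<noteq> m 1*m 2"
    and \<alpha>\<beta>: "\<alpha>*\<beta> = m 3*m 4"
    and decomp: "\<And>s t. \<alpha>*(m 1 * s - c*t)^2 + \<beta>*(d * s - m 2*t)^2
      = (m 3 + m 4)*(c*t - m 1 * s)*(d * s - m 2*t)
        - (c*d - m 1*m 2)*(d * s^2 + (m 0 - m 1 - m 2)* s*t + c*t^2)"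
  shows "kform m = 0"
proof -
  define K where "K = c*d"
  define p where "p = \<alpha>*c"
  define q where "q = \<beta>*d"
  have E1: "\<alpha>*m 1^2 + \<beta>*d^2 = - (m 3 + m 4)*m 1*d - (c*d - m 1*m 2)*d"
    using decomp[of 1 0] by (simp add: algebra_simps power2_eq_square)
  have E2: "\<alpha>*c^2 + \<beta>*m 2^2 = - (m 3 + m 4)*c*m 2 - (c*d - m 1*m 2)*c"
    using decomp[of 0 1] by (simp add: algebra_simps power2_eq_square)
  have E3: "\<alpha>*(m 1 - c)^2 + \<beta>*(d - m 2)^2
      = (m 3 + m 4)*(c - m 1)*(d - m 2) - (c*d - m 1*m 2)*(d + (m 0 - m 1 - m 2) + c)"
    using decomp[of 1 1] by simp
  have "m 1^2*p + K*q + (m 3 + m 4)*m 1*K + (K - m 1*m 2)*K = 0"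
    using E1 unfolding p_def q_def K_def by algebra
  moreover have "K*p + m 2^2*q + (m 3 + m 4)*m 2*K + (K - m 1*m 2)*K = 0"
    using E2 unfolding p_def q_def K_def by algebra
  moreover have
    "-2*m 1*p - 2*m 2*q - (m 3 + m 4)*(K + m 1*m 2) + (K - m 1*m 2)*(m 0 - m 1 - m 2) = 0"
    using E1 E2 E3 unfolding p_def q_def K_def by algebra
  moreover have "p*q = (m 3*m 4)*K"
    using \<alpha>\<beta> unfolding p_def q_def K_def by algebra
  ultimately show ?thesis
    unfolding kform_factored
    using cubic_relation_by_elimination[of "m 1" p K q "m 3 + m 4" "m 2" "m 0" "m 3*m 4"] nz
    unfolding K_def by (simp add: algebra_simps)
qed

section \<open>Conics on H\<close>

lemma Hform_scale: "Hform \<mu> (\<lambda>i. a * x i) = a^4 * Hform \<mu> x"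
  unfolding Hform_explicit by algebra

lemma Hform_transpose_34:
  "Hform (\<mu> \<circ> Transposition.transpose 3 4) (x \<circ> Transposition.transpose 3 4) = Hform \<mu> x"
  unfolding Hform_explicit by (simp add: Transposition.transpose_def algebra_simps)

lemma continuous_on_conic_pt [continuous_intros]:
  "continuous_on S f \<Longrightarrow> continuous_on S g \<Longrightarrow> continuous_on S (\<lambda>x. conic_pt A B C (f x) (g x) i)"
  unfolding conic_pt_qform by (intro continuous_intros)

lemma conic_pt_homogeneous:
  assumes "s1 * t2 = s2 * t1"
  shows "s1^2 * conic_pt A B C s2 t2 i = s2^2 * conic_pt A B C s1 t1 i"
    and "t1^2 * conic_pt A B C s2 t2 i = t2^2 * conic_pt A B C s1 t1 i"
  using assms unfolding conic_pt_def by algebra+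

locale conic_on_quartic =
  fixes \<mu> A B C :: "nat \<Rightarrow> complex"
  assumes mu_nonzero: "\<And>i. i < 5 \<Longrightarrow> \<mu> i \<noteq> 0"
    and coeff_sums: "(\<Sum>i<5. A i) = 0" "(\<Sum>i<5. B i) = 0" "(\<Sum>i<5. C i) = 0"
    and on_quartic: "\<And>s t. Hform \<mu> (conic_pt A B C s t) = 0"
    and avoids_nodes: "\<And>s t i j k. (s, t) \<noteq> (0, 0) \<Longrightarrow> i < 5 \<Longrightarrow> j < 5 \<Longrightarrow> k < 5
      \<Longrightarrow> i \<noteq> j \<Longrightarrow> i \<noteq> k \<Longrightarrow> j \<noteq> k
      \<Longrightarrow> conic_pt A B C s t i \<noteq> 0 \<or> conic_pt A B C s t j \<noteq> 0 \<or> conic_pt A B C s t k \<noteq> 0"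
    and avoids_l12: "\<And>s t. (s, t) \<noteq> (0, 0)
      \<Longrightarrow> conic_pt A B C s t 1 \<noteq> 0 \<or> conic_pt A B C s t 2 \<noteq> 0"
begin

abbreviation pt :: "complex \<Rightarrow> complex \<Rightarrow> nat \<Rightarrow> complex" where
  "pt \<equiv> conic_pt A B C"

lemma mu_nonzero_0_4: "\<mu> 0 \<noteq> 0" "\<mu> 1 \<noteq> 0" "\<mu> 2 \<noteq> 0" "\<mu> 3 \<noteq> 0" "\<mu> 4 \<noteq> 0"
  by (simp_all add: mu_nonzero)

lemma pt_sum: "(\<Sum>i<5. pt s t i) = 0"
proof -
  have "(\<Sum>i<5. pt s t i) = s^2 * (\<Sum>i<5. A i) + s * t * (\<Sum>i<5. B i) + t^2 * (\<Sum>i<5. C i)"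
    by (simp add: conic_pt_def sum.distrib sum_distrib_left)
  then show ?thesis using coeff_sums by simp
qed

lemma reparametrize:
  assumes det: "s1 * t2 - s2 * t1 \<noteq> 0"
  shows "conic_on_quartic \<mu> (pt s1 t1)
    (\<lambda>i. 2 * s1 * s2 * A i + (s1 * t2 + s2 * t1) * B i + 2 * t1 * t2 * C i) (pt s2 t2)"
    (is "conic_on_quartic \<mu> ?A ?B ?C")
proof
  have pt': "conic_pt ?A ?B ?C s t = pt (s * s1 + t * s2) (s * t1 + t * t2)" for s t
    unfolding conic_pt_def by (rule ext) algebra
  have nonzero': "(s * s1 + t * s2, s * t1 + t * t2) \<noteq> (0, 0)" if "(s, t) \<noteq> (0, 0)" for s t
  proof
    assume "(s * s1 + t * s2, s * t1 + t * t2) = (0, 0)"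
    then have "s * s1 + t * s2 = 0" "s * t1 + t * t2 = 0" by auto
    then have "s * (s1 * t2 - s2 * t1) = 0" "t * (s1 * t2 - s2 * t1) = 0" by algebra+
    with det that show False by simp
  qed
  show "\<mu> i \<noteq> 0" if "i < 5" for i using mu_nonzero that .
  show "(\<Sum>i<5. ?A i) = 0" "(\<Sum>i<5. ?C i) = 0" by (rule pt_sum)+
  show "(\<Sum>i<5. ?B i) = 0"
    using coeff_sums by (simp add: sum.distrib sum_distrib_left[symmetric])
  show "Hform \<mu> (conic_pt ?A ?B ?C s t) = 0" for s t
    unfolding pt' by (rule on_quartic)
  show "conic_pt ?A ?B ?C s t i \<noteq> 0 \<or> conic_pt ?A ?B ?C s t j \<noteq> 0 \<or> conic_pt ?A ?B ?C s t k \<noteq> 0"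
    if "(s, t) \<noteq> (0, 0)" "i < 5" "j < 5" "k < 5" "i \<noteq> j" "i \<noteq> k" "j \<noteq> k" for s t i j k
    unfolding pt' using avoids_nodes[OF nonzero'[OF that(1)] that(2-)] .
  show "conic_pt ?A ?B ?C s t 1 \<noteq> 0 \<or> conic_pt ?A ?B ?C s t 2 \<noteq> 0" if "(s, t) \<noteq> (0, 0)" for s t
    unfolding pt' using avoids_l12[OF nonzero'[OF that]] .
qed

lemma rescale:
  assumes "a \<noteq> 0"
  shows "conic_on_quartic \<mu> (\<lambda>i. a * A i) (\<lambda>i. a * B i) (\<lambda>i. a * C i)"
proof
  have pt': "conic_pt (\<lambda>i. a * A i) (\<lambda>i. a * B i) (\<lambda>i. a * C i) s t = (\<lambda>i. a * pt s t i)"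
    for s t
    unfolding conic_pt_def by (rule ext) algebra
  show "\<mu> i \<noteq> 0" if "i < 5" for i using mu_nonzero that .
  show "(\<Sum>i<5. a * A i) = 0" "(\<Sum>i<5. a * B i) = 0" "(\<Sum>i<5. a * C i) = 0"
    using coeff_sums by (simp_all add: sum_distrib_left[symmetric])
  show "Hform \<mu> (conic_pt (\<lambda>i. a * A i) (\<lambda>i. a * B i) (\<lambda>i. a * C i) s t) = 0" for s t
    unfolding pt' Hform_scale on_quartic by simp
  show "conic_pt (\<lambda>i. a * A i) (\<lambda>i. a * B i) (\<lambda>i. a * C i) s t i \<noteq> 0
      \<or> conic_pt (\<lambda>i. a * A i) (\<lambda>i. a * B i) (\<lambda>i. a * C i) s t j \<noteq> 0
      \<or> conic_pt (\<lambda>i. a * A i) (\<lambda>i. a * B i) (\<lambda>i. a * C i) s t k \<noteq> 0"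
    if "(s, t) \<noteq> (0, 0)" "i < 5" "j < 5" "k < 5" "i \<noteq> j" "i \<noteq> k" "j \<noteq> k" for s t i j k
    using avoids_nodes[OF that] assms unfolding pt' by simp
  show "conic_pt (\<lambda>i. a * A i) (\<lambda>i. a * B i) (\<lambda>i. a * C i) s t 1 \<noteq> 0
      \<or> conic_pt (\<lambda>i. a * A i) (\<lambda>i. a * B i) (\<lambda>i. a * C i) s t 2 \<noteq> 0"
    if "(s, t) \<noteq> (0, 0)" for s t
    using avoids_l12[OF that] assms unfolding pt' by simp
qed

lemma transpose_34:
  "conic_on_quartic (\<mu> \<circ> Transposition.transpose 3 4) (A \<circ> Transposition.transpose 3 4)
    (B \<circ> Transposition.transpose 3 4) (C \<circ> Transposition.transpose 3 4)"
proof -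
  let ?\<tau> = "Transposition.transpose (3::nat) 4"
  have pt': "conic_pt (A \<circ> ?\<tau>) (B \<circ> ?\<tau>) (C \<circ> ?\<tau>) s t = pt s t \<circ> ?\<tau>" for s t
    by (simp add: conic_pt_def comp_def)
  have \<tau>: "?\<tau> i < 5 \<longleftrightarrow> i < 5" "?\<tau> i = ?\<tau> j \<longleftrightarrow> i = j" "?\<tau> 1 = 1" "?\<tau> 2 = 2" for i j
    unfolding Transposition.transpose_def by auto
  have sum_\<tau>: "(\<Sum>i<5. f (?\<tau> i)) = (\<Sum>i<5. f i)" for f :: "nat \<Rightarrow> complex"
    by (simp add: sum_lessThan_5 Transposition.transpose_def algebra_simps)
  show ?thesis
  proof
    show "Hform (\<mu> \<circ> ?\<tau>) (conic_pt (A \<circ> ?\<tau>) (B \<circ> ?\<tau>) (C \<circ> ?\<tau>) s t) = 0" for s t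
      unfolding pt' Hform_transpose_34 by (rule on_quartic)
    show "conic_pt (A \<circ> ?\<tau>) (B \<circ> ?\<tau>) (C \<circ> ?\<tau>) s t i \<noteq> 0
        \<or> conic_pt (A \<circ> ?\<tau>) (B \<circ> ?\<tau>) (C \<circ> ?\<tau>) s t j \<noteq> 0
        \<or> conic_pt (A \<circ> ?\<tau>) (B \<circ> ?\<tau>) (C \<circ> ?\<tau>) s t k \<noteq> 0"
      if "(s, t) \<noteq> (0, 0)" "i < 5" "j < 5" "k < 5" "i \<noteq> j" "i \<noteq> k" "j \<noteq> k" for s t i j k
      using avoids_nodes[of s t "?\<tau> i" "?\<tau> j" "?\<tau> k"] that by (simp add: pt' \<tau>)
  qed (use mu_nonzero coeff_sums avoids_l12 in \<open>simp_all add: sum_\<tau> pt' \<tau>\<close>)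
qed

end

text \<open>The parameters are chosen so that [1:0] lies on l01 and [0:1] on l02.\<close>

locale conic_through_l01_l02 = conic_on_quartic +
  assumes ends_on_lines: "A 0 = 0" "A 1 = 0" "C 0 = 0" "C 2 = 0"
begin

lemma coords:
  "pt s t 0 = B 0 * s * t" "pt s t 1 = t * (B 1 * s + C 1 * t)" "pt s t 2 = s * (A 2 * s + B 2 * t)"
  using ends_on_lines by (simp_all add: conic_pt_def algebra_simps power2_eq_square)

lemma end_coords: "pt 1 0 i = A i" "pt 0 1 i = C i"
  by (simp_all add: conic_pt_def)

lemma end_coeffs_nonzero: "C 1 \<noteq> 0" "A 2 \<noteq> 0" "A 3 \<noteq> 0" "A 4 \<noteq> 0" "C 3 \<noteq> 0" "C 4 \<noteq> 0"
  using avoids_l12[of 0 1] avoids_l12[of 1 0] avoids_nodes[of 1 0 0 1 3] avoids_nodes[of 1 0 0 1 4]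
    avoids_nodes[of 0 1 0 2 3] avoids_nodes[of 0 1 0 2 4] ends_on_lines
  by (simp_all add: end_coords)

lemma tangency: "\<mu> 0 * B 1 + \<mu> 1 * B 0 = 0" "\<mu> 0 * B 2 + \<mu> 2 * B 0 = 0"
proof -
  define F where "F s t =
      \<mu> 0 * (B 1 * s + C 1 * t) * (A 2 * s + B 2 * t) * pt s t 3 * pt s t 4
    + B 0 * (\<mu> 1 * s * (A 2 * s + B 2 * t) + \<mu> 2 * t * (B 1 * s + C 1 * t)) * pt s t 3 * pt s t 4
    + B 0 * s * t * (B 1 * s + C 1 * t) * (A 2 * s + B 2 * t) * (\<mu> 3 * pt s t 4 + \<mu> 4 * pt s t 3)"
    for s t
  have H_F: "Hform \<mu> (pt s t) = s * t * F s t" for s t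
    unfolding Hform_explicit coords F_def by algebra
  have F_0: "F s t = 0" for s t
  proof (rule continuous_eq_0_off_axes[where P = F])
    show "continuous_on UNIV (F s)" for s
      unfolding F_def by (intro continuous_intros)
    show "continuous_on UNIV (\<lambda>s. F s t)" for t
      unfolding F_def by (intro continuous_intros)
    show "F s t = 0" if "s \<noteq> 0" "t \<noteq> 0" for s t
      using H_F[of s t] on_quartic[of s t] that by simp
  qed
  have "(\<mu> 0 * B 1 + \<mu> 1 * B 0) * A 2 * (A 3 * A 4) = 0"
    using F_0[of 1 0] by (simp add: F_def end_coords algebra_simps)
  then show "\<mu> 0 * B 1 + \<mu> 1 * B 0 = 0" using end_coeffs_nonzero by simp
  have "(\<mu> 0 * B 2 + \<mu> 2 * B 0) * C 1 * (C 3 * C 4) = 0"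
    using F_0[of 0 1] by (simp add: F_def end_coords algebra_simps)
  then show "\<mu> 0 * B 2 + \<mu> 2 * B 0 = 0" using end_coeffs_nonzero by simp
qed

lemma B0_nonzero: "B 0 \<noteq> 0"
proof
  assume B0: "B 0 = 0"
  then have "B 1 = 0" "B 2 = 0" using tangency mu_nonzero[of 0] by simp_all
  \<comment> \<open>Then the conic lies in the hyperplane X0 = 0, where H is the product X1 X2 X3 X4.\<close>
  then have H_eq: "Hform \<mu> (pt s t) = \<mu> 0 * C 1 * A 2 * s^2 * t^2 * (pt s t 3 * pt s t 4)" for s t
    unfolding Hform_explicit coords B0 by algebra
  have "pt s t 3 * pt s t 4 = 0" for s t
  proof (rule continuous_eq_0_off_axes[where P = "\<lambda>s t. pt s t 3 * pt s t 4"])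
    show "continuous_on UNIV (\<lambda>t. pt s t 3 * pt s t 4)" for s
      by (intro continuous_intros)
    show "continuous_on UNIV (\<lambda>s. pt s t 3 * pt s t 4)" for t
      by (intro continuous_intros)
    show "pt s t 3 * pt s t 4 = 0" if "s \<noteq> 0" "t \<noteq> 0" for s t
      using H_eq[of s t] on_quartic[of s t] mu_nonzero[of 0] end_coeffs_nonzero that by simp
  qed
  from this[of 1 0] show False using end_coeffs_nonzero by (simp add: end_coords)
qed

end

text \<open>The tangency relations allow rescaling the parametrisation to
  X0 = \<mu>0 s t, X1 = t (c t - \<mu>1 s), X2 = s (d s - \<mu>2 t), with c = C 1 and d = A 2.\<close>

locale normal_conic = conic_through_l01_l02 +
  assumes tangent_coeffs: "B 0 = \<mu> 0" "B 1 = - \<mu> 1" "B 2 = - \<mu> 2"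
begin

lemma normal_coords:
  "pt s t 0 = \<mu> 0 * s * t" "pt s t 1 = t * (C 1 * t - \<mu> 1 * s)" "pt s t 2 = s * (A 2 * s - \<mu> 2 * t)"
  unfolding coords tangent_coeffs by (simp_all add: algebra_simps)

lemma normal_k_nonzero: "C 1 * A 2 - \<mu> 1 * \<mu> 2 \<noteq> 0"
proof
  assume k: "C 1 * A 2 - \<mu> 1 * \<mu> 2 = 0"
  have "pt (C 1) (\<mu> 1) 1 = 0" unfolding normal_coords by algebra
  moreover have "pt (C 1) (\<mu> 1) 2 = 0" unfolding normal_coords using k by algebra
  ultimately show False using avoids_l12[of "C 1" "\<mu> 1"] end_coeffs_nonzero(1) by simp
qed

lemma normal_relation:
  "(C 1 * A 2 - \<mu> 1 * \<mu> 2) * pt s t 3 * pt s t 4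
    + (C 1 * t - \<mu> 1 * s) * (A 2 * s - \<mu> 2 * t) * (\<mu> 3 * pt s t 4 + \<mu> 4 * pt s t 3) = 0"
  (is "?R s t = 0")
proof (rule continuous_eq_0_off_axes[where P = "\<lambda>s t. ?R s t"])
  show "continuous_on UNIV (\<lambda>t. ?R s t)" for s by (intro continuous_intros)
  show "continuous_on UNIV (\<lambda>s. ?R s t)" for t by (intro continuous_intros)
  show "?R s t = 0" if "s \<noteq> 0" "t \<noteq> 0" for s t
  proof -
    have "Hform \<mu> (pt s t) = \<mu> 0 * s^2 * t^2 * ?R s t"
      unfolding Hform_explicit normal_coords by algebra
    then show ?thesis using on_quartic[of s t] mu_nonzero_0_4 that by simp
  qed
qed

lemma roots_products:
  "pt (C 1) (\<mu> 1) 3 * pt (C 1) (\<mu> 1) 4 = 0" "pt (\<mu> 2) (A 2) 3 * pt (\<mu> 2) (A 2) 4 = 0"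
proof -
  have "(C 1 * A 2 - \<mu> 1 * \<mu> 2) * (pt (C 1) (\<mu> 1) 3 * pt (C 1) (\<mu> 1) 4) = 0"
    using normal_relation[of "C 1" "\<mu> 1"] by algebra
  moreover have "(C 1 * A 2 - \<mu> 1 * \<mu> 2) * (pt (\<mu> 2) (A 2) 3 * pt (\<mu> 2) (A 2) 4) = 0"
    using normal_relation[of "\<mu> 2" "A 2"] by algebra
  ultimately show
    "pt (C 1) (\<mu> 1) 3 * pt (C 1) (\<mu> 1) 4 = 0" "pt (\<mu> 2) (A 2) 3 * pt (\<mu> 2) (A 2) 4 = 0"
    using normal_k_nonzero by simp_all
qed

lemma roots_not_both:
  "pt (C 1) (\<mu> 1) 3 \<noteq> 0 \<or> pt (C 1) (\<mu> 1) 4 \<noteq> 0" "pt (\<mu> 2) (A 2) 3 \<noteq> 0 \<or> pt (\<mu> 2) (A 2) 4 \<noteq> 0"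
proof -
  have "pt (C 1) (\<mu> 1) 1 = 0" "pt (\<mu> 2) (A 2) 2 = 0"
    unfolding normal_coords by (simp_all add: algebra_simps)
  then show
    "pt (C 1) (\<mu> 1) 3 \<noteq> 0 \<or> pt (C 1) (\<mu> 1) 4 \<noteq> 0" "pt (\<mu> 2) (A 2) 3 \<noteq> 0 \<or> pt (\<mu> 2) (A 2) 4 \<noteq> 0"
    using avoids_nodes[of "C 1" "\<mu> 1" 1 3 4] avoids_nodes[of "\<mu> 2" "A 2" 2 3 4]
      end_coeffs_nonzero(1,2) by auto
qed

lemma double_root_3_factor:
  assumes "pt (C 1) (\<mu> 1) 3 = 0" "pt (\<mu> 2) (A 2) 3 = 0"
  shows "\<mu> 1 * A 2 * pt s t 3 = - A 3 * ((C 1 * t - \<mu> 1 * s) * (A 2 * s - \<mu> 2 * t))"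
proof -
  have "qform (A 3) (B 3) (C 3) (C 1) (\<mu> 1) = 0" "qform (A 3) (B 3) (C 3) (\<mu> 2) (A 2) = 0"
    using assms by (simp_all add: conic_pt_qform)
  moreover have "C 1 * A 2 - \<mu> 2 * \<mu> 1 \<noteq> 0"
    using normal_k_nonzero by (simp add: mult.commute)
  ultimately have "\<mu> 1 * A 2 * qform (A 3) (B 3) (C 3) s t
      = A 3 * (\<mu> 1 * s - C 1 * t) * (A 2 * s - \<mu> 2 * t)"
    using qform_two_roots end_coeffs_nonzero(1) mu_nonzero_0_4(2) by blast
  then show ?thesis by (simp add: conic_pt_qform algebra_simps)
qed

lemma no_double_root_3:
  assumes "pt (C 1) (\<mu> 1) 3 = 0" "pt (\<mu> 2) (A 2) 3 = 0"
  shows False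
proof -
  define k where "k = C 1 * A 2 - \<mu> 1 * \<mu> 2"
  define M where "M s t = (C 1 * t - \<mu> 1 * s) * (A 2 * s - \<mu> 2 * t)" for s t
  \<comment> \<open>With X3 a multiple of M the relation reads M \<phi> = 0 on the line s = C 1, so by
    continuity \<phi> vanishes there, also at the roots of M.\<close>
  define \<phi> where "\<phi> t = (\<mu> 3 * \<mu> 1 * A 2 - k * A 3) * pt (C 1) t 4 - \<mu> 4 * A 3 * M (C 1) t" for t
  have "M (C 1) t * \<phi> t = \<mu> 1 * A 2 * (k * pt (C 1) t 3 * pt (C 1) t 4
      + M (C 1) t * (\<mu> 3 * pt (C 1) t 4 + \<mu> 4 * pt (C 1) t 3))" for t
    using double_root_3_factor[OF assms, of "C 1" t] unfolding \<phi>_def M_def by algebra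
  then have M_\<phi>: "M (C 1) t * \<phi> t = 0" for t
    using normal_relation[of "C 1" t] unfolding k_def M_def by simp
  have "\<phi> t = 0" if "t \<notin> {\<mu> 1, A 2 * C 1 / \<mu> 2}" for t
  proof -
    have "C 1 * t - \<mu> 1 * C 1 \<noteq> 0"
      using that end_coeffs_nonzero(1)
      by (metis mult.commute mult_cancel_left right_minus_eq insertCI)
    moreover have "A 2 * C 1 - \<mu> 2 * t \<noteq> 0"
      using that mu_nonzero_0_4(3) by (auto simp: field_simps)
    ultimately show ?thesis using M_\<phi>[of t] by (simp add: M_def)
  qed
  moreover have "continuous_on UNIV \<phi>"
    unfolding \<phi>_def M_def by (intro continuous_intros)
  ultimately have \<phi>_0: "\<phi> z = 0" for z
    using continuous_on_const_off_finite[of \<phi> "{\<mu> 1, A 2 * C 1 / \<mu> 2}"] by blast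
  have "pt (C 1) (\<mu> 1) 4 \<noteq> 0" using roots_not_both(1) assms(1) by simp
  then have "k * A 3 = \<mu> 3 * \<mu> 1 * A 2" using \<phi>_0[of "\<mu> 1"] by (simp add: \<phi>_def M_def)
  then have "A 3 * M (C 1) 0 = 0" using \<phi>_0[of 0] mu_nonzero_0_4 by (simp add: \<phi>_def)
  then show False using end_coeffs_nonzero mu_nonzero_0_4 by (simp add: M_def)
qed

lemma split_roots_square_forms:
  assumes root3: "pt (C 1) (\<mu> 1) 3 = 0" and root4: "pt (\<mu> 2) (A 2) 4 = 0"
  shows "\<exists>\<alpha>. \<forall>s t. (C 1 * A 2 - \<mu> 1 * \<mu> 2) * pt s t 3
      + \<mu> 3 * ((C 1 * t - \<mu> 1 * s) * (A 2 * s - \<mu> 2 * t)) = \<alpha> * (\<mu> 1 * s - C 1 * t)^2"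
    and "\<exists>\<beta>. \<forall>s t. (C 1 * A 2 - \<mu> 1 * \<mu> 2) * pt s t 4
      + \<mu> 4 * ((C 1 * t - \<mu> 1 * s) * (A 2 * s - \<mu> 2 * t)) = \<beta> * (A 2 * s - \<mu> 2 * t)^2"
proof -
  define k where "k = C 1 * A 2 - \<mu> 1 * \<mu> 2"
  define M where "M = qform (- \<mu> 1 * A 2) (C 1 * A 2 + \<mu> 1 * \<mu> 2) (- C 1 * \<mu> 2)"
  define U where "U = qform (k * A 3 + \<mu> 3 * (- \<mu> 1 * A 2))
    (k * B 3 + \<mu> 3 * (C 1 * A 2 + \<mu> 1 * \<mu> 2)) (k * C 3 + \<mu> 3 * (- C 1 * \<mu> 2))"
  define V where "V = qform (k * A 4 + \<mu> 4 * (- \<mu> 1 * A 2))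
    (k * B 4 + \<mu> 4 * (C 1 * A 2 + \<mu> 1 * \<mu> 2)) (k * C 4 + \<mu> 4 * (- C 1 * \<mu> 2))"
  have M_eq: "M s t = (C 1 * t - \<mu> 1 * s) * (A 2 * s - \<mu> 2 * t)" for s t
    unfolding M_def qform_def by algebra
  have U_eq: "U s t = k * pt s t 3 + \<mu> 3 * M s t" for s t
    unfolding U_def M_def conic_pt_qform qform_lincomb ..
  have V_eq: "V s t = k * pt s t 4 + \<mu> 4 * M s t" for s t
    unfolding V_def M_def conic_pt_qform qform_lincomb ..
  \<comment> \<open>The relation says U V = \<mu>3 \<mu>4 M^2, and M is the product of the two linear forms.\<close>
  have UV: "U s t * V s t = (\<mu> 1 * s - C 1 * t)^2 * (\<mu> 3 * \<mu> 4 * (A 2 * s - \<mu> 2 * t)^2)"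
    and VU: "V s t * U s t = (A 2 * s - \<mu> 2 * t)^2 * (\<mu> 3 * \<mu> 4 * (\<mu> 1 * s - C 1 * t)^2)" for s t
    using normal_relation[of s t] unfolding U_eq V_eq M_eq k_def by algebra+
  have "M (C 1) (\<mu> 1) = 0" "M (\<mu> 2) (A 2) = 0" "k \<noteq> 0"
    using normal_k_nonzero by (simp_all add: M_eq k_def mult.commute)
  then have at_roots:
    "U (C 1) (\<mu> 1) = 0" "V (C 1) (\<mu> 1) \<noteq> 0" "V (\<mu> 2) (A 2) = 0" "U (\<mu> 2) (A 2) \<noteq> 0"
    using root3 root4 roots_not_both by (auto simp: U_eq V_eq)
  have "\<exists>\<alpha>. \<forall>s t. U s t = \<alpha> * (\<mu> 1 * s - C 1 * t)^2"
    unfolding U_def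
    by (rule qform_square_if_product_square[where W = "\<lambda>s t. \<mu> 3 * \<mu> 4 * (A 2 * s - \<mu> 2 * t)^2",
          OF end_coeffs_nonzero(1) mu_nonzero_0_4(2) UV[unfolded U_def V_def] _
          at_roots(1,2)[unfolded U_def V_def]])
      (intro continuous_intros)
  then show "\<exists>\<alpha>. \<forall>s t. (C 1 * A 2 - \<mu> 1 * \<mu> 2) * pt s t 3
      + \<mu> 3 * ((C 1 * t - \<mu> 1 * s) * (A 2 * s - \<mu> 2 * t)) = \<alpha> * (\<mu> 1 * s - C 1 * t)^2"
    by (simp only: U_eq M_eq k_def)
  have "\<exists>\<beta>. \<forall>s t. V s t = \<beta> * (A 2 * s - \<mu> 2 * t)^2"
    unfolding V_def
    by (rule qform_square_if_product_square[where W = "\<lambda>s t. \<mu> 3 * \<mu> 4 * (\<mu> 1 * s - C 1 * t)^2",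
          OF mu_nonzero_0_4(3) end_coeffs_nonzero(2) VU[unfolded U_def V_def] _
          at_roots(3,4)[unfolded U_def V_def]])
      (intro continuous_intros)
  then show "\<exists>\<beta>. \<forall>s t. (C 1 * A 2 - \<mu> 1 * \<mu> 2) * pt s t 4
      + \<mu> 4 * ((C 1 * t - \<mu> 1 * s) * (A 2 * s - \<mu> 2 * t)) = \<beta> * (A 2 * s - \<mu> 2 * t)^2"
    by (simp only: V_eq M_eq k_def)
qed

lemma kform_eq_0_if_split_roots:
  assumes "pt (C 1) (\<mu> 1) 3 = 0" "pt (\<mu> 2) (A 2) 4 = 0"
  shows "kform \<mu> = 0"
proof -
  obtain \<alpha> \<beta> where
    \<alpha>: "\<And>s t. (C 1 * A 2 - \<mu> 1 * \<mu> 2) * pt s t 3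
      + \<mu> 3 * ((C 1 * t - \<mu> 1 * s) * (A 2 * s - \<mu> 2 * t)) = \<alpha> * (\<mu> 1 * s - C 1 * t)^2" and
    \<beta>: "\<And>s t. (C 1 * A 2 - \<mu> 1 * \<mu> 2) * pt s t 4
      + \<mu> 4 * ((C 1 * t - \<mu> 1 * s) * (A 2 * s - \<mu> 2 * t)) = \<beta> * (A 2 * s - \<mu> 2 * t)^2"
    using split_roots_square_forms[OF assms] by blast
  have "(\<mu> 1 * A 2)^2 * (\<alpha> * \<beta>) = (\<mu> 1 * A 2)^2 * (\<mu> 3 * \<mu> 4)"
    using \<alpha>[of 1 0] \<beta>[of 1 0] normal_relation[of 1 0] by algebra
  then have "\<alpha> * \<beta> = \<mu> 3 * \<mu> 4"
    using mu_nonzero_0_4 end_coeffs_nonzero by simp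
  moreover have "\<alpha> * (\<mu> 1 * s - C 1 * t)^2 + \<beta> * (A 2 * s - \<mu> 2 * t)^2
      = (\<mu> 3 + \<mu> 4) * (C 1 * t - \<mu> 1 * s) * (A 2 * s - \<mu> 2 * t)
        - (C 1 * A 2 - \<mu> 1 * \<mu> 2) * (A 2 * s^2 + (\<mu> 0 - \<mu> 1 - \<mu> 2) * s * t + C 1 * t^2)" for s t
    using \<alpha>[of s t] \<beta>[of s t] pt_sum[of s t] unfolding sum_lessThan_5 normal_coords by algebra
  ultimately show ?thesis
    using kform_eq_0_if_square_decomposition mu_nonzero_0_4 end_coeffs_nonzero normal_k_nonzero
    by simp
qed

lemma kform_eq_0_if_root_3:
  assumes "pt (C 1) (\<mu> 1) 3 = 0"
  shows "kform \<mu> = 0"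
proof -
  have "pt (\<mu> 2) (A 2) 3 \<noteq> 0" using no_double_root_3 assms by blast
  then have "pt (\<mu> 2) (A 2) 4 = 0" using roots_products(2) by simp
  then show ?thesis by (rule kform_eq_0_if_split_roots[OF assms])
qed

lemma normal_kform_eq_0: "kform \<mu> = 0"
proof (cases "pt (C 1) (\<mu> 1) 3 = 0")
  case True
  then show ?thesis by (rule kform_eq_0_if_root_3)
next
  case False
  \<comment> \<open>Then coordinate 4 vanishes at the root instead, and we exchange the roles of X3 and X4.\<close>
  let ?\<tau> = "Transposition.transpose (3::nat) 4"
  have \<tau>: "?\<tau> 0 = 0" "?\<tau> 1 = 1" "?\<tau> 2 = 2" "?\<tau> 3 = 4"
    by (simp_all add: Transposition.transpose_def)
  interpret swapped: normal_conic "\<mu> \<circ> ?\<tau>" "A \<circ> ?\<tau>" "B \<circ> ?\<tau>" "C \<circ> ?\<tau>"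
    using transpose_34 ends_on_lines tangent_coeffs
    by (simp add: normal_conic_def normal_conic_axioms_def conic_through_l01_l02_def
        conic_through_l01_l02_axioms_def \<tau>)
  have "pt (C 1) (\<mu> 1) 4 = 0" using roots_products(1) False by simp
  then have "kform (\<mu> \<circ> ?\<tau>) = 0"
    using swapped.kform_eq_0_if_root_3 by (simp add: conic_pt_def \<tau>)
  then show ?thesis by (simp add: kform_transpose_34)
qed

end

context conic_through_l01_l02
begin

lemma kform_eq_0: "kform \<mu> = 0"
proof -
  define a where "a = \<mu> 0 / B 0"
  have "B 0 * (a * B 1 + \<mu> 1) = \<mu> 0 * B 1 + \<mu> 1 * B 0"
    "B 0 * (a * B 2 + \<mu> 2) = \<mu> 0 * B 2 + \<mu> 2 * B 0"
    unfolding a_def using B0_nonzero by (simp_all add: field_simps)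
  then have "a * B 1 = - \<mu> 1" "a * B 2 = - \<mu> 2"
    using tangency B0_nonzero by (simp_all add: eq_neg_iff_add_eq_0)
  moreover have "a \<noteq> 0" "a * B 0 = \<mu> 0"
    unfolding a_def using B0_nonzero mu_nonzero[of 0] by simp_all
  ultimately interpret normal: normal_conic \<mu> "\<lambda>i. a * A i" "\<lambda>i. a * B i" "\<lambda>i. a * C i"
    using rescale ends_on_lines
    by (simp add: normal_conic_def normal_conic_axioms_def conic_through_l01_l02_def
        conic_through_l01_l02_axioms_def)
  show ?thesis by (rule normal.normal_kform_eq_0)
qed

end

context conic_on_quartic
begin

lemma kform_eq_0_if_meets_l01_l02:
  assumes P1: "(s1, t1) \<noteq> (0, 0)" "pt s1 t1 0 = 0" "pt s1 t1 1 = 0"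
    and P2: "(s2, t2) \<noteq> (0, 0)" "pt s2 t2 0 = 0" "pt s2 t2 2 = 0"
  shows "kform \<mu> = 0"
proof -
  have det: "s1 * t2 - s2 * t1 \<noteq> 0"
  proof
    assume "s1 * t2 - s2 * t1 = 0"
    \<comment> \<open>Proportional parameters give the same point, which would then lie on l12.\<close>
    then have "s2^2 * pt s1 t1 2 = 0" "t2^2 * pt s1 t1 2 = 0"
      using conic_pt_homogeneous[of s1 t2 s2 t1 A B C 2] P2(3) by simp_all
    then have "pt s1 t1 2 = 0" using P2(1) by auto
    then show False using avoids_l12[OF P1(1)] P1(3) by simp
  qed
  interpret through: conic_through_l01_l02 \<mu> "pt s1 t1"
    "\<lambda>i. 2 * s1 * s2 * A i + (s1 * t2 + s2 * t1) * B i + 2 * t1 * t2 * C i" "pt s2 t2"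
    using reparametrize[OF det] P1 P2
    by (simp add: conic_through_l01_l02_def conic_through_l01_l02_axioms_def)
  show ?thesis by (rule through.kform_eq_0)
qed

end

lemma conic_on_quartic_if_in_smooth_locus:
  assumes "\<forall>i<5. \<mu> i \<noteq> 0" "conic_data A B C"
    and smooth: "\<forall>s t. (s, t) \<noteq> (0, 0) \<longrightarrow> smooth_pt_P3 (Hform \<mu>) (conic_pt A B C s t)"
    and "\<not> (\<exists>s t. (s, t) \<noteq> (0, 0) \<and> conic_pt A B C s t 1 = 0 \<and> conic_pt A B C s t 2 = 0)"
  shows "conic_on_quartic \<mu> A B C"
proof
  show "\<mu> i \<noteq> 0" if "i < 5" for i using assms(1) that by simp
  show "(\<Sum>i<5. A i) = 0" "(\<Sum>i<5. B i) = 0" "(\<Sum>i<5. C i) = 0"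
    using assms(2) by (simp_all add: conic_data_def)
  show "Hform \<mu> (conic_pt A B C s t) = 0" for s t
  proof (cases "(s, t) = (0, 0)")
    case True
    then show ?thesis by (intro Hform_eq_0_if_two_coords_0[of 0 1]) (auto simp: conic_pt_def)
  qed (use smooth in \<open>simp add: smooth_pt_P3_def\<close>)
  show "conic_pt A B C s t i \<noteq> 0 \<or> conic_pt A B C s t j \<noteq> 0 \<or> conic_pt A B C s t k \<noteq> 0"
    if "(s, t) \<noteq> (0, 0)" "i < 5" "j < 5" "k < 5" "i \<noteq> j" "i \<noteq> k" "j \<noteq> k" for s t i j k
    using smooth_pt_not_three_coords_0 smooth that by blast
  show "conic_pt A B C s t 1 \<noteq> 0 \<or> conic_pt A B C s t 2 \<noteq> 0" if "(s, t) \<noteq> (0, 0)" for s t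
    using assms(4) that by blast
qed

theorem lemma7:
  fixes \<mu> A B C :: "nat \<Rightarrow> complex"
  assumes mu_nz: "\<forall>i<5. \<mu> i \<noteq> 0"
    and cubic_smooth: "smooth_surface_P3 (Sform \<mu>)"
    and conic: "conic_data A B C"
    and in_smooth_locus: "\<forall>s t. (s, t) \<noteq> (0, 0) \<longrightarrow> smooth_pt_P3 (Hform \<mu>) (conic_pt A B C s t)"
    and meets01: "\<exists>s t. (s, t) \<noteq> (0, 0) \<and> conic_pt A B C s t 0 = 0 \<and> conic_pt A B C s t 1 = 0"
    and meets02: "\<exists>s t. (s, t) \<noteq> (0, 0) \<and> conic_pt A B C s t 0 = 0 \<and> conic_pt A B C s t 2 = 0"
    and misses12: "\<not> (\<exists>s t. (s, t) \<noteq> (0, 0) \<and> conic_pt A B C s t 1 = 0 \<and> conic_pt A B C s t 2 = 0)"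
  shows "kform \<mu> = 0 \<and> irreducible (kform mvar)"
proof -
  interpret conic_on_quartic \<mu> A B C
    using mu_nz conic in_smooth_locus misses12 by (rule conic_on_quartic_if_in_smooth_locus)
  obtain s1 t1 s2 t2 where "(s1, t1) \<noteq> (0, 0)" "pt s1 t1 0 = 0" "pt s1 t1 1 = 0"
    "(s2, t2) \<noteq> (0, 0)" "pt s2 t2 0 = 0" "pt s2 t2 2 = 0"
    using meets01 meets02 by blast
  then have "kform \<mu> = 0" by (rule kform_eq_0_if_meets_l01_l02)
  with irreducible_kform_mvar show ?thesis by simp
qed

end
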